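(* Let $R$ be a ring and $\mathfrak a\in \mathrm{Ass}_l(R)$. Then: (1) The set $\mathrm{Den}_l(R,\mathfrak a)$ is an ordered abelian semigroup under the product $S_1S_2:=\langle S_1,S_2\rangle$ (the multiplicative subsemigroup of $(R,\cdot)$ generated by $S_1$ and $S_2$); that is, for $S_1,S_2,S_3\in \mathrm{Den}_l(R,\mathfrak a)$ we have $S_1S_2\in \mathrm{Den}_l(R,\mathfrak a)$, $S_1S_2=S_2S_1$, and $S_1\subseteq S_2$ implies $S_1S_3\subseteq S_2S_3$. (2) The set $S_{\mathfrak a}(R):=\bigcup_{S\in \mathrm{Den}_l(R,\mathfrak a)}S$ belongs to $\mathrm{Den}_l(R,\mathfrak a)$, and hence is the largest element of $(\mathrm{Den}_l(R,\mathfrak a),\subseteq)$. (3) If $S_i\in \mathrm{Den}_l(R,\mathfrak a)$ for $i\in I$, where $I$ is an arbitrary non-empty set, then $\langle S_i\mid i\in I\rangle:=\bigcup_{\emptyset\neq J\subseteq I,\ |J|<\infty}\prod_{j\in J}S_j$ belongs to $\mathrm{Den}_l(R,\mathfrak a)$ and is the least upper bound of $\{S_i\}_{i\in I}$ in $(\mathrm{Den}_l(R,\mathfrak a),\subseteq)$.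
   Context: Rings are associative with $1$. A multiplicatively closed subset $S$ of a ring $R$ is a subset with $1\in S$, $0\notin S$ and $st\in S$ for all $s,t\in S$. It is a left Ore set if $Sr\cap Rs\neq\emptyset$ for all $r\in R$, $s\in S$. For a left Ore set $S$, $\mathrm{ass}(S):=\{r\in R\mid sr=0 \text{ for some } s\in S\}$ (an ideal of $R$). A left Ore set $S$ is a left denominator set if whenever $rs=0$ with $r\in R$, $s\in S$, there is $t\in S$ with $tr=0$ (equivalently, the left localization $S^{-1}R$ exists). $\mathrm{Den}_l(R)$ is the set of left denominator sets of $R$, $\mathrm{Ass}_l(R):=\{\mathrm{ass}(S)\mid S\in \mathrm{Den}_l(R)\}$, and for an ideal $\mathfrak a\in\mathrm{Ass}_l(R)$, $\mathrm{Den}_l(R,\mathfrak a):=\{S\in \mathrm{Den}_l(R)\mid \mathrm{ass}(S)=\mathfrak a\}$. *)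

theory Defs
  imports Main
begin

definition mult_closed :: "'a::ring_1 set \<Rightarrow> bool" where
  "mult_closed S \<longleftrightarrow> 1 \<in> S \<and> 0 \<notin> S \<and> (\<forall>s\<in>S. \<forall>t\<in>S. s * t \<in> S)"

definition left_ore :: "'a::ring_1 set \<Rightarrow> bool" where
  "left_ore S \<longleftrightarrow> mult_closed S \<and> (\<forall>r. \<forall>s\<in>S. \<exists>s'\<in>S. \<exists>r'. s' * r = r' * s)"

definition ass :: "'a::ring_1 set \<Rightarrow> 'a set" where
  "ass S = {r. \<exists>s\<in>S. s * r = 0}"

definition left_den :: "'a::ring_1 set \<Rightarrow> bool" where
  "left_den S \<longleftrightarrow> left_ore S \<and> (\<forall>r. \<forall>s\<in>S. r * s = 0 \<longrightarrow> (\<exists>t\<in>S. t * r = 0))"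

definition Den_l :: "'a::ring_1 set set" where
  "Den_l = {S. left_den S}"

definition Ass_l :: "'a::ring_1 set set" where
  "Ass_l = ass ` Den_l"

definition Den_l_ass :: "'a::ring_1 set \<Rightarrow> 'a set set" where
  "Den_l_ass \<aa> = {S \<in> Den_l. ass S = \<aa>}"

definition mult_gen :: "'a::ring_1 set \<Rightarrow> 'a set" where
  "mult_gen X = \<Inter>{T. X \<subseteq> T \<and> (\<forall>x\<in>T. \<forall>y\<in>T. x * y \<in> T)}"

definition den_prod :: "'a::ring_1 set \<Rightarrow> 'a set \<Rightarrow> 'a set" where
  "den_prod S1 S2 = mult_gen (S1 \<union> S2)"

text \<open>The product of the family (S j) for j in a finite nonempty J, in the semigroup
  (iterated <_,_>), i.e. the subsemigroup generated by the S j, j in J.\<close>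
definition fam_prod :: "('i \<Rightarrow> 'a::ring_1 set) \<Rightarrow> 'i set \<Rightarrow> 'a set" where
  "fam_prod S J = mult_gen (\<Union>j\<in>J. S j)"

definition fam_gen :: "('i \<Rightarrow> 'a::ring_1 set) \<Rightarrow> 'i set \<Rightarrow> 'a set" where
  "fam_gen S I = (\<Union>J\<in>{J. J \<noteq> {} \<and> J \<subseteq> I \<and> finite J}. fam_prod S J)"

end

theory Submission
  imports Defs HOL.Hull
begin

text \<open>All three parts rest on one fact: if \<open>F\<close> is a non-empty family of left denominator
  sets with common \<open>ass S = \<aa>\<close>, then the subsemigroup generated by \<open>\<Union>F\<close> is again a left
  denominator set with \<open>ass = \<aa>\<close>. Each defining property (the Ore condition, left
  reversibility, and \<open>g * y \<in> \<aa> \<Longrightarrow> y \<in> \<aa>\<close>, which controls \<open>ass\<close>) holds on the generators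
  and is inherited by products, hence holds on the whole generated semigroup. Then \<open>S\<^sub>1S\<^sub>2\<close>,
  \<open>S\<^sub>\<aa>(R)\<close> and \<open>\<langle>S\<^sub>i | i \<in> I\<rangle>\<close> are all semigroups generated by such unions.\<close>

subsection \<open>Generated subsemigroups\<close>

definition closed_under_mult :: "'a::times set \<Rightarrow> bool" where
  "closed_under_mult T \<longleftrightarrow> (\<forall>x\<in>T. \<forall>y\<in>T. x * y \<in> T)"

lemma mult_gen_eq_hull: "mult_gen X = closed_under_mult hull X"
  unfolding mult_gen_def hull_def closed_under_mult_def by (simp add: conj_commute)

lemma closed_under_mult_Inter: "\<forall>T\<in>\<T>. closed_under_mult T \<Longrightarrow> closed_under_mult (\<Inter>\<T>)"
  unfolding closed_under_mult_def by blast

lemma closed_under_mult_mult_gen: "closed_under_mult (mult_gen X)"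
  unfolding mult_gen_eq_hull by (rule hull_in) (rule closed_under_mult_Inter)

lemma mult_gen_mult: "x \<in> mult_gen X \<Longrightarrow> y \<in> mult_gen X \<Longrightarrow> x * y \<in> mult_gen X"
  using closed_under_mult_mult_gen unfolding closed_under_mult_def by blast

lemma subset_mult_gen: "X \<subseteq> mult_gen X"
  unfolding mult_gen_eq_hull by (rule hull_subset)

lemma mult_gen_mono: "X \<subseteq> Y \<Longrightarrow> mult_gen X \<subseteq> mult_gen Y"
  unfolding mult_gen_eq_hull by (rule hull_mono)

lemma mult_gen_minimal: "X \<subseteq> T \<Longrightarrow> closed_under_mult T \<Longrightarrow> mult_gen X \<subseteq> T"
  unfolding mult_gen_eq_hull by (rule hull_minimal)

lemma mult_gen_induct:
  assumes "g \<in> mult_gen X" "\<And>x. x \<in> X \<Longrightarrow> P x" "\<And>x y. P x \<Longrightarrow> P y \<Longrightarrow> P (x * y)"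
  shows "P g"
  using assms unfolding mult_gen_eq_hull
  by (intro hull_induct[of g closed_under_mult X P]) (auto simp: closed_under_mult_def)

lemma mult_gen_Un_left: "mult_gen (mult_gen A \<union> B) = mult_gen (A \<union> B)"
  unfolding mult_gen_eq_hull by (rule hull_Un_left[symmetric])

lemma mult_gen_Un_right: "mult_gen (A \<union> mult_gen B) = mult_gen (A \<union> B)"
  unfolding mult_gen_eq_hull by (rule hull_Un_right[symmetric])

lemma mem_Den_l_ass: "S \<in> Den_l_ass \<aa> \<longleftrightarrow> left_den S \<and> ass S = \<aa>"
  unfolding Den_l_ass_def Den_l_def by simp

lemma left_den_mult_closed: "left_den S \<Longrightarrow> mult_closed S"
  unfolding left_den_def left_ore_def by simp

lemma Den_l_ass_closed_under_mult: "S \<in> Den_l_ass \<aa> \<Longrightarrow> closed_under_mult S"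
  unfolding mem_Den_l_ass left_den_def left_ore_def mult_closed_def closed_under_mult_def by simp

lemma ass_mono: "S \<subseteq> T \<Longrightarrow> ass S \<subseteq> ass T"
  unfolding ass_def by blast

lemma zero_in_ass: "mult_closed S \<Longrightarrow> 0 \<in> ass S"
  unfolding mult_closed_def ass_def by auto

lemma one_notin_ass: "mult_closed S \<Longrightarrow> 1 \<notin> ass S"
  unfolding mult_closed_def ass_def by auto

lemma ass_cancel:
  assumes "mult_closed S" "s \<in> S" "s * y \<in> ass S"
  shows "y \<in> ass S"
proof -
  from assms(3) obtain t where "t \<in> S" "t * (s * y) = 0"
    unfolding ass_def by auto
  then have "t * s \<in> S" "(t * s) * y = 0"
    using assms(1,2) unfolding mult_closed_def by (auto simp: mult.assoc)
  then show ?thesis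
    unfolding ass_def by blast
qed

subsection \<open>The semigroup generated by a family of denominator sets\<close>

lemma ass_mult_gen_Union:
  assumes "S\<^sub>0 \<in> F" and F: "\<forall>S\<in>F. mult_closed S \<and> ass S = \<aa>"
  shows "ass (mult_gen (\<Union>F)) = \<aa>"
proof
  have cancel: "\<forall>y. g * y \<in> \<aa> \<longrightarrow> y \<in> \<aa>" if "g \<in> mult_gen (\<Union>F)" for g
    using that
  proof (rule mult_gen_induct)
    fix x assume "x \<in> \<Union>F"
    then obtain S where "S \<in> F" "x \<in> S"
      by blast
    with F have "mult_closed S" "ass S = \<aa>"
      by blast+
    then show "\<forall>y. x * y \<in> \<aa> \<longrightarrow> y \<in> \<aa>"
      using ass_cancel[OF \<open>mult_closed S\<close> \<open>x \<in> S\<close>] by simp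
  next
    fix x z
    assume x: "\<forall>y. x * y \<in> \<aa> \<longrightarrow> y \<in> \<aa>" and z: "\<forall>y. z * y \<in> \<aa> \<longrightarrow> y \<in> \<aa>"
    show "\<forall>y. x * z * y \<in> \<aa> \<longrightarrow> y \<in> \<aa>"
      using x z by (metis mult.assoc)
  qed
  have S\<^sub>0: "mult_closed S\<^sub>0" "ass S\<^sub>0 = \<aa>"
    using assms by blast+
  show "ass (mult_gen (\<Union>F)) \<subseteq> \<aa>"
  proof
    fix r assume "r \<in> ass (mult_gen (\<Union>F))"
    then obtain g where "g \<in> mult_gen (\<Union>F)" "g * r = 0"
      unfolding ass_def by blast
    moreover have "0 \<in> \<aa>"
      using zero_in_ass[OF S\<^sub>0(1)] S\<^sub>0(2) by simp
    ultimately show "r \<in> \<aa>"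
      using cancel by simp
  qed
  have "S\<^sub>0 \<subseteq> mult_gen (\<Union>F)"
    using \<open>S\<^sub>0 \<in> F\<close> subset_mult_gen[of "\<Union>F"] by blast
  then show "\<aa> \<subseteq> ass (mult_gen (\<Union>F))"
    using ass_mono S\<^sub>0(2) by blast
qed

lemma mult_closed_mult_gen_Union:
  assumes "S\<^sub>0 \<in> F" and F: "\<forall>S\<in>F. mult_closed S \<and> ass S = \<aa>"
  shows "mult_closed (mult_gen (\<Union>F))"
proof -
  let ?G = "mult_gen (\<Union>F)"
  have "1 \<in> ?G"
    using assms subset_mult_gen[of "\<Union>F"] unfolding mult_closed_def by blast
  moreover have "0 \<notin> ?G"
  proof
    assume "0 \<in> ?G"
    then have "1 \<in> ass ?G"
      unfolding ass_def by force
    then show False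
      using ass_mult_gen_Union[OF assms] one_notin_ass assms by blast
  qed
  ultimately show ?thesis
    unfolding mult_closed_def using mult_gen_mult by blast
qed

lemma ore_mult_gen_Union:
  assumes "\<forall>S\<in>F. left_ore S" and "g \<in> mult_gen (\<Union>F)"
  shows "\<exists>g'\<in>mult_gen (\<Union>F). \<exists>r'. g' * r = r' * g"
proof -
  let ?G = "mult_gen (\<Union>F)"
  have "\<forall>r. \<exists>g'\<in>?G. \<exists>r'. g' * r = r' * g"
    using assms(2)
  proof (rule mult_gen_induct)
    fix x assume "x \<in> \<Union>F"
    then obtain S where "S \<in> F" "x \<in> S" "S \<subseteq> ?G"
      using subset_mult_gen[of "\<Union>F"] by blast
    then show "\<forall>r. \<exists>g'\<in>?G. \<exists>r'. g' * r = r' * x"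
      using assms(1) unfolding left_ore_def by blast
  next
    fix x y
    assume x: "\<forall>r. \<exists>g'\<in>?G. \<exists>r'. g' * r = r' * x"
      and y: "\<forall>r. \<exists>g'\<in>?G. \<exists>r'. g' * r = r' * y"
    show "\<forall>r. \<exists>g'\<in>?G. \<exists>r'. g' * r = r' * (x * y)"
    proof
      fix r
      obtain g\<^sub>2 r\<^sub>2 where "g\<^sub>2 \<in> ?G" "g\<^sub>2 * r = r\<^sub>2 * y"
        using y by blast
      moreover obtain g\<^sub>1 r\<^sub>1 where "g\<^sub>1 \<in> ?G" "g\<^sub>1 * r\<^sub>2 = r\<^sub>1 * x"
        using x by blast
      ultimately have "g\<^sub>1 * g\<^sub>2 \<in> ?G" "(g\<^sub>1 * g\<^sub>2) * r = r\<^sub>1 * (x * y)"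
        by (auto intro: mult_gen_mult) (metis mult.assoc)
      then show "\<exists>g'\<in>?G. \<exists>r'. g' * r = r' * (x * y)"
        by blast
    qed
  qed
  then show ?thesis
    by blast
qed

lemma reversible_mult_gen_Union:
  assumes "\<forall>S\<in>F. left_den S" and "g \<in> mult_gen (\<Union>F)" and "r * g = 0"
  shows "\<exists>t\<in>mult_gen (\<Union>F). t * r = 0"
proof -
  let ?G = "mult_gen (\<Union>F)"
  have "\<forall>r. r * g = 0 \<longrightarrow> (\<exists>t\<in>?G. t * r = 0)"
    using assms(2)
  proof (rule mult_gen_induct)
    fix x assume "x \<in> \<Union>F"
    then obtain S where "S \<in> F" "x \<in> S" "S \<subseteq> ?G"
      using subset_mult_gen[of "\<Union>F"] by blast
    moreover have "\<forall>r. r * x = 0 \<longrightarrow> (\<exists>t\<in>S. t * r = 0)"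
      using assms(1) \<open>S \<in> F\<close> \<open>x \<in> S\<close> unfolding left_den_def by blast
    ultimately show "\<forall>r. r * x = 0 \<longrightarrow> (\<exists>t\<in>?G. t * r = 0)"
      by blast
  next
    fix x y
    assume x: "\<forall>r. r * x = 0 \<longrightarrow> (\<exists>t\<in>?G. t * r = 0)"
      and y: "\<forall>r. r * y = 0 \<longrightarrow> (\<exists>t\<in>?G. t * r = 0)"
    show "\<forall>r. r * (x * y) = 0 \<longrightarrow> (\<exists>t\<in>?G. t * r = 0)"
    proof (intro allI impI)
      fix r assume "r * (x * y) = 0"
      then have "(r * x) * y = 0"
        by (simp add: mult.assoc)
      then obtain t\<^sub>2 where t\<^sub>2: "t\<^sub>2 \<in> ?G" "t\<^sub>2 * (r * x) = 0"
        using y by blast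
      then have "(t\<^sub>2 * r) * x = 0"
        by (simp add: mult.assoc)
      then obtain t\<^sub>1 where t\<^sub>1: "t\<^sub>1 \<in> ?G" "t\<^sub>1 * (t\<^sub>2 * r) = 0"
        using x by blast
      have "t\<^sub>1 * t\<^sub>2 \<in> ?G" "(t\<^sub>1 * t\<^sub>2) * r = 0"
        using t\<^sub>1 t\<^sub>2 by (simp_all add: mult_gen_mult mult.assoc)
      then show "\<exists>t\<in>?G. t * r = 0"
        by blast
    qed
  qed
  then show ?thesis
    using assms(3) by blast
qed

theorem mult_gen_Union_in_Den_l_ass:
  assumes "F \<subseteq> Den_l_ass \<aa>" "F \<noteq> {}"
  shows "mult_gen (\<Union>F) \<in> Den_l_ass \<aa>"
proof -
  let ?G = "mult_gen (\<Union>F)"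
  obtain S\<^sub>0 where "S\<^sub>0 \<in> F"
    using assms(2) by blast
  have den: "\<forall>S\<in>F. left_den S" and "\<forall>S\<in>F. ass S = \<aa>"
    using assms(1) unfolding Den_l_ass_def Den_l_def by auto
  then have closed: "\<forall>S\<in>F. mult_closed S \<and> ass S = \<aa>"
    using left_den_mult_closed by blast
  have ore: "\<forall>S\<in>F. left_ore S"
    using den unfolding left_den_def by blast
  have "mult_closed ?G"
    using \<open>S\<^sub>0 \<in> F\<close> closed by (rule mult_closed_mult_gen_Union)
  moreover have "\<exists>g'\<in>?G. \<exists>r'. g' * r = r' * g" if "g \<in> ?G" for g r
    using ore that by (rule ore_mult_gen_Union)
  moreover have "\<exists>t\<in>?G. t * r = 0" if "g \<in> ?G" "r * g = 0" for g r
    using den that by (rule reversible_mult_gen_Union)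
  ultimately have "left_den ?G"
    unfolding left_den_def left_ore_def by blast
  moreover have "ass ?G = \<aa>"
    using \<open>S\<^sub>0 \<in> F\<close> closed by (rule ass_mult_gen_Union)
  ultimately show ?thesis
    unfolding mem_Den_l_ass by blast
qed

lemma fam_gen_eq_mult_gen:
  assumes "I \<noteq> {}"
  shows "fam_gen S I = mult_gen (\<Union>(S ` I))"
proof
  show "fam_gen S I \<subseteq> mult_gen (\<Union>(S ` I))"
    unfolding fam_gen_def fam_prod_def by (intro UN_least mult_gen_mono) auto
  have "S i \<subseteq> fam_gen S I" if "i \<in> I" for i
  proof -
    have "S i \<subseteq> fam_prod S {i}"
      using subset_mult_gen[of "S i"] by (simp add: fam_prod_def)
    then show ?thesis
      using that unfolding fam_gen_def by blast
  qed
  moreover have "closed_under_mult (fam_gen S I)"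
    unfolding closed_under_mult_def
  proof (intro ballI)
    fix x y assume "x \<in> fam_gen S I" "y \<in> fam_gen S I"
    then obtain J\<^sub>1 J\<^sub>2 where J: "J\<^sub>1 \<noteq> {}" "J\<^sub>1 \<subseteq> I" "finite J\<^sub>1" "x \<in> fam_prod S J\<^sub>1"
      "J\<^sub>2 \<subseteq> I" "finite J\<^sub>2" "y \<in> fam_prod S J\<^sub>2"
      unfolding fam_gen_def by blast
    have "fam_prod S J \<subseteq> fam_prod S (J\<^sub>1 \<union> J\<^sub>2)" if "J \<subseteq> J\<^sub>1 \<union> J\<^sub>2" for J
      using that unfolding fam_prod_def by (intro mult_gen_mono) blast
    then have "x \<in> fam_prod S (J\<^sub>1 \<union> J\<^sub>2)" "y \<in> fam_prod S (J\<^sub>1 \<union> J\<^sub>2)"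
      using J(4,7) by blast+
    then have "x * y \<in> fam_prod S (J\<^sub>1 \<union> J\<^sub>2)"
      unfolding fam_prod_def by (rule mult_gen_mult)
    then show "x * y \<in> fam_gen S I"
      using J unfolding fam_gen_def by blast
  qed
  ultimately show "mult_gen (\<Union>(S ` I)) \<subseteq> fam_gen S I"
    by (intro mult_gen_minimal) auto
qed

lemma den_prod_in_Den_l_ass:
  "S\<^sub>1 \<in> Den_l_ass \<aa> \<Longrightarrow> S\<^sub>2 \<in> Den_l_ass \<aa> \<Longrightarrow> den_prod S\<^sub>1 S\<^sub>2 \<in> Den_l_ass \<aa>"
  using mult_gen_Union_in_Den_l_ass[of "{S\<^sub>1, S\<^sub>2}"] unfolding den_prod_def by simp

lemma den_prod_commute: "den_prod S\<^sub>1 S\<^sub>2 = den_prod S\<^sub>2 S\<^sub>1"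
  unfolding den_prod_def by (simp only: Un_commute)

lemma den_prod_assoc: "den_prod (den_prod S\<^sub>1 S\<^sub>2) S\<^sub>3 = den_prod S\<^sub>1 (den_prod S\<^sub>2 S\<^sub>3)"
  unfolding den_prod_def mult_gen_Un_left mult_gen_Un_right by (simp only: Un_assoc)

lemma den_prod_mono_left: "S\<^sub>1 \<subseteq> S\<^sub>2 \<Longrightarrow> den_prod S\<^sub>1 S\<^sub>3 \<subseteq> den_prod S\<^sub>2 S\<^sub>3"
  unfolding den_prod_def by (intro mult_gen_mono Un_mono subset_refl)

lemma Union_Den_l_ass_in_Den_l_ass:
  assumes "Den_l_ass \<aa> \<noteq> {}"
  shows "\<Union>(Den_l_ass \<aa>) \<in> Den_l_ass \<aa>"
proof -
  have G: "mult_gen (\<Union>(Den_l_ass \<aa>)) \<in> Den_l_ass \<aa>"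
    using assms by (intro mult_gen_Union_in_Den_l_ass subset_refl)
  then have "mult_gen (\<Union>(Den_l_ass \<aa>)) = \<Union>(Den_l_ass \<aa>)"
    by (intro subset_antisym Union_upper subset_mult_gen)
  with G show ?thesis
    by simp
qed

lemma Den_l_ass_nonempty: "\<aa> \<in> Ass_l \<Longrightarrow> Den_l_ass \<aa> \<noteq> {}"
  unfolding Ass_l_def Den_l_ass_def by blast

lemma fam_gen_in_Den_l_ass:
  assumes "I \<noteq> {}" "\<forall>i\<in>I. S i \<in> Den_l_ass \<aa>"
  shows "fam_gen S I \<in> Den_l_ass \<aa>"
  unfolding fam_gen_eq_mult_gen[OF assms(1)]
  using assms by (intro mult_gen_Union_in_Den_l_ass) blast+

lemma fam_gen_upper:
  assumes "I \<noteq> {}" "i \<in> I"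
  shows "S i \<subseteq> fam_gen S I"
  unfolding fam_gen_eq_mult_gen[OF assms(1)]
  using assms(2) subset_mult_gen[of "\<Union>(S ` I)"] by blast

lemma fam_gen_least:
  assumes "I \<noteq> {}" "T \<in> Den_l_ass \<aa>" "\<forall>i\<in>I. S i \<subseteq> T"
  shows "fam_gen S I \<subseteq> T"
  unfolding fam_gen_eq_mult_gen[OF assms(1)]
  using assms(3) by (intro mult_gen_minimal Den_l_ass_closed_under_mult[OF assms(2)]) blast

theorem theorem2p1:
  fixes \<aa> :: "'a::ring_1 set"
  assumes "\<aa> \<in> Ass_l"
  shows "(\<forall>S1\<in>Den_l_ass \<aa>. \<forall>S2\<in>Den_l_ass \<aa>. \<forall>S3\<in>Den_l_ass \<aa>.
            den_prod S1 S2 \<in> Den_l_ass \<aa>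
          \<and> den_prod S1 S2 = den_prod S2 S1
          \<and> den_prod (den_prod S1 S2) S3 = den_prod S1 (den_prod S2 S3)
          \<and> (S1 \<subseteq> S2 \<longrightarrow> den_prod S1 S3 \<subseteq> den_prod S2 S3))
    \<and> (\<Union>(Den_l_ass \<aa>) \<in> Den_l_ass \<aa> \<and> (\<forall>S\<in>Den_l_ass \<aa>. S \<subseteq> \<Union>(Den_l_ass \<aa>)))
    \<and> (\<forall>(I :: 'i set) (S :: 'i \<Rightarrow> 'a set). I \<noteq> {} \<longrightarrow> (\<forall>i\<in>I. S i \<in> Den_l_ass \<aa>) \<longrightarrow>
          (fam_gen S I \<in> Den_l_ass \<aa>
          \<and> (\<forall>i\<in>I. S i \<subseteq> fam_gen S I)
          \<and> (\<forall>T\<in>Den_l_ass \<aa>. (\<forall>i\<in>I. S i \<subseteq> T) \<longrightarrow> fam_gen S I \<subseteq> T)))"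
proof (intro conjI ballI allI impI)
  fix S1 S2 S3
  assume "S1 \<in> Den_l_ass \<aa>" "S2 \<in> Den_l_ass \<aa>"
  then show "den_prod S1 S2 \<in> Den_l_ass \<aa>"
    by (rule den_prod_in_Den_l_ass)
  show "den_prod S1 S2 = den_prod S2 S1"
    by (rule den_prod_commute)
  show "den_prod (den_prod S1 S2) S3 = den_prod S1 (den_prod S2 S3)"
    by (rule den_prod_assoc)
  show "S1 \<subseteq> S2 \<Longrightarrow> den_prod S1 S3 \<subseteq> den_prod S2 S3"
    by (rule den_prod_mono_left)
next
  show "\<Union>(Den_l_ass \<aa>) \<in> Den_l_ass \<aa>"
    using assms by (intro Union_Den_l_ass_in_Den_l_ass Den_l_ass_nonempty)
next
  fix S assume "S \<in> Den_l_ass \<aa>"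
  then show "S \<subseteq> \<Union>(Den_l_ass \<aa>)"
    by (rule Union_upper)
next
  fix I :: "'i set" and S :: "'i \<Rightarrow> 'a set"
  assume "I \<noteq> {}" "\<forall>i\<in>I. S i \<in> Den_l_ass \<aa>"
  then show "fam_gen S I \<in> Den_l_ass \<aa>"
    by (rule fam_gen_in_Den_l_ass)
  show "i \<in> I \<Longrightarrow> S i \<subseteq> fam_gen S I" for i
    using \<open>I \<noteq> {}\<close> by (rule fam_gen_upper)
  show "T \<in> Den_l_ass \<aa> \<Longrightarrow> \<forall>i\<in>I. S i \<subseteq> T \<Longrightarrow> fam_gen S I \<subseteq> T" for T
    using \<open>I \<noteq> {}\<close> by (rule fam_gen_least)
qed

end
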